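(* Let $\mathcal I$ be an admissible ideal on $\mathbb N$. Then $\mathcal A\not\subseteq\mathfrak N^{\mathcal I}$: there is an Arbault set which does not belong to $\mathfrak N^{\mathcal I}$.
   Context: $\mathbb T=\mathbb R/\mathbb Z$ identified with $[0,1]$ (0 and 1 identified); $\|x\|$ is the distance from $x$ to the nearest integer. An ideal $\mathcal I$ on $\mathbb N$ is a nonempty family of subsets of $\mathbb N$ closed under finite unions and subsets with $\mathbb N\notin\mathcal I$; admissible means all singletons belong to it. $\mathcal A$: Arbault sets, i.e. sets $X\subseteq[0,1]$ with an increasing sequence of naturals $(a_n)$ such that $\|a_nx\|\to0$ for all $x\in X$. $\mathfrak N^{\mathcal I}$: the family of sets $X\subseteq[0,1]$ for which there exist an increasing sequence of naturals $(a_n)$ and a decreasing sequence of positive reals $(r_n)$ with $\sum_n r_n=\infty$, such that every $A\subseteq\mathbb N$ with $\sum_{n\in A}r_n<\infty$ belongs to $\mathcal I$, and such that $\sum_n r_n\|a_nx\|<\infty$ for all $x\in X$. *)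

theory Defs
  imports Complex_Main
begin

definition dint :: "real \<Rightarrow> real" where
  "dint x = \<bar>x - real_of_int (round x)\<bar>"

definition ideal_on_nat :: "nat set set \<Rightarrow> bool" where
  "ideal_on_nat I \<longleftrightarrow> I \<noteq> {} \<and>
     (\<forall>A\<in>I. \<forall>B\<in>I. A \<union> B \<in> I) \<and>
     (\<forall>A\<in>I. \<forall>B. B \<subseteq> A \<longrightarrow> B \<in> I) \<and>
     UNIV \<notin> I"

definition admissible_ideal :: "nat set set \<Rightarrow> bool" where
  "admissible_ideal I \<longleftrightarrow> ideal_on_nat I \<and> (\<forall>n. {n} \<in> I)"

definition arbault :: "real set \<Rightarrow> bool" where
  "arbault X \<longleftrightarrow> X \<subseteq> {0..1} \<and>
     (\<exists>a :: nat \<Rightarrow> nat. strict_mono a \<and>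
        (\<forall>x\<in>X. (\<lambda>n. dint (real (a n) * x)) \<longlonglongrightarrow> 0))"

definition N_ideal :: "nat set set \<Rightarrow> real set set" where
  "N_ideal I = {X. X \<subseteq> {0..1} \<and>
     (\<exists>(a :: nat \<Rightarrow> nat) (r :: nat \<Rightarrow> real).
        strict_mono a \<and> decseq r \<and> (\<forall>n. r n > 0) \<and> \<not> summable r \<and>
        (\<forall>A. summable (\<lambda>n. if n \<in> A then r n else 0) \<longrightarrow> A \<in> I) \<and>
        (\<forall>x\<in>X. summable (\<lambda>n. r n * dint (real (a n) * x))))}"

end

theory Submission
  imports Defs
begin

(*
  Let X be the set of x in [0,1] with ||32^(k^2) x|| -> 0; it is an Arbault set. Given any
  increasing (a_n) and positive non-summable (r_n) we construct x in X with
  sum_n r_n ||a_n x|| = oo, so X lies outside N^I for every ideal I.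

  Let 32^(e_n) be the least power of 32 that is at least 2 a_n, and choose W -> oo so slowly
  that sum_n r_n 32^(-W(e_n)) still diverges. The point x has base-32 digits 0 and 1, and its
  digits at positions in the windows (k^2, k^2 + W k] vanish, which gives
  ||32^(k^2) x|| <= 32^(-W k). Let J_n be the first position >= e_n outside all windows; every
  such position j carries a greedily chosen digit, which makes the indices n with J_n = j
  contribute at least a quarter of sum r_n a_n 32^(-j) to sum r_n ||a_n x||. As the windows are
  short, J_n <= e_n + W(e_n), so these terms dominate r_n 32^(-W(e_n)) / 64.
*)

lemma dint_le_dist_int: "dint x \<le> \<bar>x - real_of_int m\<bar>"
proof -
  let ?f = "x - real_of_int (round x)"
  have f: "\<bar>?f\<bar> \<le> 1/2" using of_int_round_abs_le[of x] by linarith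
  have "\<bar>?f\<bar> \<le> \<bar>?f + real_of_int (round x - m)\<bar>"
  proof (cases "round x - m = 0")
    case False
    then have "1 \<le> \<bar>real_of_int (round x - m)\<bar>" by linarith
    then show ?thesis using f by linarith
  qed simp
  then show ?thesis unfolding dint_def by simp
qed

lemma dint_nonneg: "0 \<le> dint x"
  by (simp add: dint_def)

lemma dint_le_abs: "dint x \<le> \<bar>x\<bar>"
  using dint_le_dist_int[of x 0] by simp

lemma dint_triangle: "dint (x + y) \<le> dint x + dint y"
proof -
  have "dint (x + y) \<le> \<bar>x + y - real_of_int (round x + round y)\<bar>" by (rule dint_le_dist_int)
  also have "\<dots> \<le> dint x + dint y" unfolding dint_def by simp
  finally show ?thesis .
qed

lemma dint_uminus [simp]: "dint (- x) = dint x"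
  using dint_le_dist_int[of "-x" "- round x"] dint_le_dist_int[of x "- round (-x)"]
  by (simp add: dint_def)

lemma dint_add_int [simp]: "dint (x + real_of_int m) = dint x"
  using dint_le_dist_int[of "x + real_of_int m" "round x + m"]
    dint_le_dist_int[of x "round (x + real_of_int m) - m"]
  by (simp add: dint_def)

lemma dint_le_dint_add_dist: "dint x \<le> dint y + \<bar>x - y\<bar>"
  using dint_triangle[of y "x - y"] dint_le_abs[of "x - y"] by simp

lemma dint_eq_self: "0 \<le> x \<Longrightarrow> x \<le> 1/2 \<Longrightarrow> dint x = x"
  using dint_le_dist_int[of x "round x"] of_int_round_abs_le[of x] dint_le_abs[of x]
  unfolding dint_def by (cases "round x \<le> 0") linarith+

lemma le_dint_add_dint: "0 \<le> d \<Longrightarrow> d \<le> 1/2 \<Longrightarrow> d \<le> dint (y + d) + dint y"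
  using dint_eq_self[of d] dint_triangle[of "y + d" "- y"] by simp

lemma not_summable_disjoint_blocks:
  fixes g :: "nat \<Rightarrow> real" and B :: "nat \<Rightarrow> nat set"
  assumes g0: "\<And>n. 0 \<le> g n" and fin: "\<And>m. finite (B m)"
    and disj: "\<And>m m'. m \<noteq> m' \<Longrightarrow> B m \<inter> B m' = {}" and big: "\<And>m. 1 \<le> (\<Sum>n\<in>B m. g n)"
  shows "\<not> summable g"
proof
  assume sg: "summable g"
  have "real M \<le> suminf g" for M
  proof -
    have "real M \<le> (\<Sum>m<M. \<Sum>n\<in>B m. g n)"
      using sum_mono[of "{..<M}" "\<lambda>_. 1::real", OF big] by simp
    also have "\<dots> = (\<Sum>n\<in>(\<Union>m<M. B m). g n)"
      by (rule sum.UNION_disjoint[symmetric]) (use fin disj in auto)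
    also have "\<dots> \<le> suminf g"
      by (rule sum_le_suminf[OF sg]) (use fin g0 in auto)
    finally show ?thesis .
  qed
  then show False
    using reals_Archimedean2[of "suminf g"] by (meson not_le)
qed

lemma nonsummable_block_partition:
  fixes r :: "nat \<Rightarrow> real" and \<psi> :: "nat \<Rightarrow> nat" and c :: "nat \<Rightarrow> real"
  assumes r0: "\<And>n. 0 \<le> r n" and ns: "\<not> summable r" and fin: "\<And>K. finite {n. \<psi> n < K}"
  obtains T :: "nat \<Rightarrow> nat" where "strict_mono T" "T 0 = 0"
    "\<And>m. c m \<le> (\<Sum>n\<in>{n. T m \<le> \<psi> n \<and> \<psi> n < T (Suc m)}. r n)"
proof -
  have finb: "finite {n. T \<le> \<psi> n \<and> \<psi> n < T'}" for T T'
    by (rule finite_subset[OF _ fin[of T']]) auto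
  have "\<exists>T'>T. B \<le> (\<Sum>n\<in>{n. T \<le> \<psi> n \<and> \<psi> n < T'}. r n)" for T B
  proof -
    obtain N where N: "(\<Sum>n\<in>{n. \<psi> n < T}. r n) + B < (\<Sum>n<N. r n)"
      using ns summableI_nonneg_bounded[OF r0]
      by (meson not_le)
    define T' where "T' = Suc (Max (insert T (\<psi> ` {..<N})))"
    have "T < T'" unfolding T'_def by (simp add: le_imp_less_Suc)
    have "{..<N} \<subseteq> {n. \<psi> n < T} \<union> {n. T \<le> \<psi> n \<and> \<psi> n < T'}"
      unfolding T'_def by (auto simp: le_imp_less_Suc)
    then have "(\<Sum>n<N. r n) \<le> (\<Sum>n\<in>{n. \<psi> n < T} \<union> {n. T \<le> \<psi> n \<and> \<psi> n < T'}. r n)"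
      by (intro sum_mono2) (use fin finb r0 in auto)
    also have "\<dots> = (\<Sum>n\<in>{n. \<psi> n < T}. r n) + (\<Sum>n\<in>{n. T \<le> \<psi> n \<and> \<psi> n < T'}. r n)"
      by (rule sum.union_disjoint) (use fin finb in auto)
    finally show ?thesis using N \<open>T < T'\<close> by force
  qed
  then obtain f where f: "\<And>T B. T < f T B \<and> B \<le> (\<Sum>n\<in>{n. T \<le> \<psi> n \<and> \<psi> n < f T B}. r n)"
    by metis
  define T where "T = rec_nat 0 (\<lambda>m t. f t (c m))"
  have T_Suc: "T (Suc m) = f (T m) (c m)" for m
    by (simp add: T_def)
  show thesis
  proof (rule that)
    show "strict_mono T"
      unfolding strict_mono_Suc_iff T_Suc using f by simp
    show "T 0 = 0"
      by (simp add: T_def)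
    show "c m \<le> (\<Sum>n\<in>{n. T m \<le> \<psi> n \<and> \<psi> n < T (Suc m)}. r n)" for m
      unfolding T_Suc using f by simp
  qed
qed

lemma block_index_function:
  fixes T :: "nat \<Rightarrow> nat"
  assumes T: "strict_mono T" "T 0 = 0"
  obtains W :: "nat \<Rightarrow> nat" where "mono W" "\<And>k. W k \<le> k" "filterlim W at_top sequentially"
    "\<And>m k. T m \<le> k \<Longrightarrow> k < T (Suc m) \<Longrightarrow> W k = m"
proof -
  define W where "W k = (LEAST m. k < T (Suc m))" for k
  have W_above: "k < T (Suc (W k))" for k
    unfolding W_def by (rule LeastI[of _ k]) (use seq_suble[OF T(1), of "Suc k"] in auto)
  have W_le: "k < T (Suc m) \<Longrightarrow> W k \<le> m" for k m
    unfolding W_def by (rule Least_le)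
  have W_ge: "T m \<le> k \<Longrightarrow> m \<le> W k" for m k
  proof (rule ccontr)
    assume "T m \<le> k" "\<not> m \<le> W k"
    then have "T (Suc (W k)) \<le> k"
      using strict_mono_less_eq[OF T(1), of "Suc (W k)" m] by simp
    with W_above[of k] show False by simp
  qed
  have "mono W"
  proof (rule monoI)
    fix k k' :: nat
    assume "k \<le> k'"
    then show "W k \<le> W k'"
      using W_above[of k'] by (intro W_le) simp
  qed
  moreover have "W k \<le> k" for k
    using seq_suble[OF T(1), of "Suc k"] by (intro W_le) simp
  moreover have "filterlim W at_top sequentially"
    unfolding filterlim_at_top eventually_sequentially using W_ge by blast
  moreover have "W k = m" if "T m \<le> k" "k < T (Suc m)" for m k
    using W_le[OF that(2)] W_ge[OF that(1)] by simp
  ultimately show thesis by (rule that)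
qed

lemma slow_weight_not_summable:
  fixes r \<epsilon> :: "nat \<Rightarrow> real" and \<psi> :: "nat \<Rightarrow> nat"
  assumes r0: "\<And>n. 0 \<le> r n" and ns: "\<not> summable r" and fin: "\<And>K. finite {n. \<psi> n < K}"
    and \<epsilon>: "\<And>m. 0 < \<epsilon> m"
  obtains W :: "nat \<Rightarrow> nat" where "mono W" "\<And>k. W k \<le> k" "filterlim W at_top sequentially"
    "\<not> summable (\<lambda>n. r n * \<epsilon> (W (\<psi> n)))"
proof -
  obtain T where T: "strict_mono T" "T 0 = 0"
    and block: "\<And>m. 1 / \<epsilon> m \<le> (\<Sum>n\<in>{n. T m \<le> \<psi> n \<and> \<psi> n < T (Suc m)}. r n)"
    using nonsummable_block_partition[OF r0 ns fin, where c = "\<lambda>m. 1 / \<epsilon> m"] by blast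
  obtain W where W: "mono W" "\<And>k. W k \<le> k" "filterlim W at_top sequentially"
    and W_block: "\<And>m k. T m \<le> k \<Longrightarrow> k < T (Suc m) \<Longrightarrow> W k = m"
    using block_index_function[OF T] by blast
  define B where "B m = {n. T m \<le> \<psi> n \<and> \<psi> n < T (Suc m)}" for m
  have "\<not> summable (\<lambda>n. r n * \<epsilon> (W (\<psi> n)))"
  proof (rule not_summable_disjoint_blocks)
    show "finite (B m)" for m
      by (rule finite_subset[OF _ fin[of "T (Suc m)"]]) (auto simp: B_def)
    show "B m \<inter> B m' = {}" if "m \<noteq> m'" for m m'
      using W_block that unfolding B_def by blast
    show "1 \<le> (\<Sum>n\<in>B m. r n * \<epsilon> (W (\<psi> n)))" for m
    proof -
      have "(\<Sum>n\<in>B m. r n * \<epsilon> (W (\<psi> n))) = \<epsilon> m * (\<Sum>n\<in>B m. r n)"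
        unfolding sum_distrib_left using W_block by (intro sum.cong) (auto simp: B_def)
      also have "\<dots> \<ge> \<epsilon> m * (1 / \<epsilon> m)"
        using block[of m] \<epsilon>[of m] by (intro mult_left_mono) (auto simp: B_def)
      finally show ?thesis using \<epsilon>[of m] by simp
    qed
  qed (use r0 \<epsilon> in \<open>simp add: less_imp_le\<close>)
  with W show thesis by (rule that)
qed

definition square_gaps :: "(nat \<Rightarrow> nat) \<Rightarrow> nat set" where
  "square_gaps W = {j. 0 < j \<and> (\<forall>k. \<not> (k * k < j \<and> j \<le> k * k + W k))}"

lemma square_gaps_dense:
  fixes W :: "nat \<Rightarrow> nat"
  assumes W: "mono W" "\<And>k. W k \<le> k" and "0 < i"
  shows "\<exists>j\<in>square_gaps W. i \<le> j \<and> j \<le> i + W i"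
proof (cases "i \<in> square_gaps W")
  case False
  then obtain k where k: "k * k < i" "i \<le> k * k + W k"
    using \<open>0 < i\<close> unfolding square_gaps_def by auto
  define j where "j = k * k + W k + 1"
  have "k \<le> k * k" by (cases k) auto
  then have "W k \<le> W i" using k(1) by (intro monoD[OF W(1)]) linarith
  then have "j \<le> i + W i" using k unfolding j_def by simp
  moreover have "j \<in> square_gaps W" unfolding square_gaps_def
  proof (intro CollectI conjI allI notI)
    fix k' assume k': "k' * k' < j \<and> j \<le> k' * k' + W k'"
    consider "k' < k" | "k' = k" | "k < k'" by linarith
    then show False
    proof cases
      case 1
      then have "(k' + 1) * (k' + 1) \<le> k * k" using mult_le_mono[of "k' + 1" k "k' + 1" k] by simp
      then show False using k' W(2)[of k'] unfolding j_def by (simp add: algebra_simps)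
    next
      case 3
      then have "(k + 1) * (k + 1) \<le> k' * k'" using mult_le_mono[of "k + 1" k' "k + 1" k'] by simp
      then show False using k' W(2)[of k] unfolding j_def by (simp add: algebra_simps)
    qed (use k' in \<open>simp add: j_def\<close>)
  qed (simp add: j_def)
  moreover have "i \<le> j" using k unfolding j_def by simp
  ultimately show ?thesis by blast
qed auto

lemma least_square_gap_above:
  fixes W :: "nat \<Rightarrow> nat"
  assumes W: "mono W" "\<And>k. W k \<le> k" and "0 < i"
  defines "j \<equiv> LEAST j. j \<in> square_gaps W \<and> i \<le> j"
  shows "j \<in> square_gaps W" "i \<le> j" "j \<le> i + W i"
proof -
  obtain j' where j': "j' \<in> square_gaps W" "i \<le> j'" "j' \<le> i + W i"
    using square_gaps_dense[OF W \<open>0 < i\<close>] by blast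
  show "j \<in> square_gaps W" "i \<le> j"
    using LeastI[of "\<lambda>j. j \<in> square_gaps W \<and> i \<le> j", OF conjI[OF j'(1,2)]] unfolding j_def by auto
  show "j \<le> i + W i"
    using Least_le[of "\<lambda>j. j \<in> square_gaps W \<and> i \<le> j", OF conjI[OF j'(1,2)]] j'(3)
    unfolding j_def by simp
qed

fun greedy_approx :: "(nat \<Rightarrow> real \<Rightarrow> real) \<Rightarrow> nat set \<Rightarrow> nat \<Rightarrow> real" where
  "greedy_approx F Js 0 = 0"
| "greedy_approx F Js (Suc i) = greedy_approx F Js i +
     (if Suc i \<in> Js \<and> F (Suc i) (greedy_approx F Js i) \<le> F (Suc i) (greedy_approx F Js i + (1/32)^Suc i)
      then (1/32)^Suc i else 0)"

definition greedy_limit :: "(nat \<Rightarrow> real \<Rightarrow> real) \<Rightarrow> nat set \<Rightarrow> real" where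
  "greedy_limit F Js = (\<Sum>i. greedy_approx F Js (Suc i) - greedy_approx F Js i)"

lemma greedy_approx_times_power_int: "\<exists>m::int. (32::real)^j * greedy_approx F Js j = of_int m"
proof (induction j)
  case (Suc i)
  then obtain m :: int where m: "32^i * greedy_approx F Js i = of_int m" by blast
  show ?case
  proof (cases "Suc i \<in> Js \<and> F (Suc i) (greedy_approx F Js i) \<le> F (Suc i) (greedy_approx F Js i + (1/32)^Suc i)")
    case True
    then have "(32::real)^Suc i * greedy_approx F Js (Suc i) = 32 * (32^i * greedy_approx F Js i) + 1"
      by (simp add: algebra_simps power_one_over)
    then show ?thesis using m by (intro exI[of _ "32 * m + 1"]) simp
  next
    case False
    then have "(32::real)^Suc i * greedy_approx F Js (Suc i) = 32 * (32^i * greedy_approx F Js i)"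
      by simp
    then show ?thesis using m by (intro exI[of _ "32 * m"]) simp
  qed
qed simp

lemma greedy_approx_choice:
  assumes "Suc i \<in> Js"
  shows "F (Suc i) (greedy_approx F Js i) + F (Suc i) (greedy_approx F Js i + (1/32)^Suc i)
           \<le> 2 * F (Suc i) (greedy_approx F Js (Suc i))"
  using assms by auto

lemma greedy_approx_constant:
  assumes "\<And>j. k < j \<Longrightarrow> j \<le> k + w \<Longrightarrow> j \<notin> Js"
  shows "greedy_approx F Js (k + w) = greedy_approx F Js k"
  using assms by (induction w) auto

lemma greedy_limit_tail:
  "0 \<le> greedy_limit F Js - greedy_approx F Js j"
  "greedy_limit F Js - greedy_approx F Js j \<le> (1/32)^j / 31"
proof -
  define d where "d i = greedy_approx F Js (Suc i) - greedy_approx F Js i" for i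
  have d0: "0 \<le> d i" and d1: "d i \<le> (1/32)^Suc i" for i
    by (auto simp: d_def)
  have geo: "(\<lambda>n. (1/32::real)^Suc (n + j)) sums ((1/32)^Suc j * (1 / (1 - 1/32)))"
    using sums_mult[OF geometric_sums[of "1/32::real"], of "(1/32)^Suc j"]
    by (simp add: power_add mult_ac)
  have "summable d"
    by (rule summable_comparison_test'[of "\<lambda>i. (1/32::real)^Suc i" 0])
      (use d0 d1 in \<open>auto simp: summable_geometric\<close>)
  then have sdj: "summable (\<lambda>n. d (n + j))"
    by (simp add: summable_iff_shift)
  have "greedy_limit F Js = (\<Sum>n. d (n + j)) + (\<Sum>i<j. d i)"
    unfolding greedy_limit_def d_def[symmetric] by (rule suminf_split_initial_segment[OF \<open>summable d\<close>])
  also have "(\<Sum>i<j. d i) = greedy_approx F Js j"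
    unfolding d_def by (subst sum_lessThan_telescope) simp
  finally have tail: "greedy_limit F Js - greedy_approx F Js j = (\<Sum>n. d (n + j))" by simp
  have "(\<Sum>n. d (n + j)) \<le> (\<Sum>n. (1/32::real)^Suc (n + j))"
    by (rule suminf_le[OF _ sdj sums_summable[OF geo]]) (use d1 in auto)
  also have "\<dots> = (1/32)^j / 31"
    using geo by (simp add: sums_iff)
  finally show "greedy_limit F Js - greedy_approx F Js j \<le> (1/32)^j / 31"
    using tail by simp
  show "0 \<le> greedy_limit F Js - greedy_approx F Js j"
    using tail suminf_nonneg[OF sdj] d0 by simp
qed

lemma dint_power_times_greedy_limit:
  assumes "\<And>j. m < j \<Longrightarrow> j \<le> m + w \<Longrightarrow> j \<notin> Js"
  shows "dint ((32::real)^m * greedy_limit F Js) \<le> (1/32)^w / 31"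
proof -
  let ?x = "greedy_limit F Js" and ?z = "greedy_approx F Js"
  obtain k :: int where k: "32^m * ?z m = of_int k"
    using greedy_approx_times_power_int by blast
  have "32^m * ?x = 32^m * (?x - ?z (m + w)) + of_int k"
    using greedy_approx_constant[OF assms] k by (simp add: algebra_simps)
  then have "dint (32^m * ?x) \<le> \<bar>32^m * (?x - ?z (m + w))\<bar>"
    using dint_le_abs by simp
  also have "\<dots> \<le> 32^m * ((1/32)^(m + w) / 31)"
    using greedy_limit_tail[of F Js "m + w"] by (simp add: abs_mult)
  also have "\<dots> = (1/32)^w / 31"
    by (simp add: power_add power_one_over)
  finally show ?thesis .
qed

lemma greedy_limit_square_gaps:
  assumes "filterlim W at_top sequentially"
  shows "(\<lambda>k. dint ((32::real)^(k * k) * greedy_limit F (square_gaps W))) \<longlonglongrightarrow> 0"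
proof (rule tendsto_sandwich[of "\<lambda>k. 0" _ _ "\<lambda>k. (1/32)^(W k) / 31"])
  show "\<forall>\<^sub>F k in sequentially. dint (32^(k * k) * greedy_limit F (square_gaps W)) \<le> (1/32)^(W k) / 31"
    by (intro always_eventually allI dint_power_times_greedy_limit) (auto simp: square_gaps_def)
  have "(\<lambda>k. (1/32::real)^(W k)) \<longlonglongrightarrow> 0"
    by (rule filterlim_compose[OF LIMSEQ_power_zero assms]) simp
  then show "(\<lambda>k. (1/32::real)^(W k) / 31) \<longlonglongrightarrow> 0"
    by (intro tendsto_divide_zero)
qed (auto simp: dint_nonneg)

(* For n in G the number b n 32^(-j) is at most 1/2, so it is bounded by the sum of the
   distances of b n z and b n (z + 32^(-j)) to the integers; the greedy digit keeps the larger of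
   the two values of F j. *)
lemma greedy_approx_block_lower:
  fixes b :: "nat \<Rightarrow> nat" and r :: "nat \<Rightarrow> real"
  assumes "0 < j" "j \<in> Js" and b: "\<And>n. n \<in> G \<Longrightarrow> 2 * b n \<le> (32::nat)^j"
    and r0: "\<And>n. 0 \<le> r n" and F: "F j = (\<lambda>y. \<Sum>n\<in>G. r n * dint (real (b n) * y))"
  shows "(\<Sum>n\<in>G. r n * real (b n)) * (1/32)^j \<le> 2 * F j (greedy_approx F Js j)"
proof -
  obtain i where i: "j = Suc i" using \<open>0 < j\<close> gr0_implies_Suc by blast
  let ?z = "greedy_approx F Js i" and ?\<delta> = "(1/32::real)^j"
  have "(\<Sum>n\<in>G. r n * real (b n)) * ?\<delta> \<le> F j ?z + F j (?z + ?\<delta>)"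
    unfolding F sum_distrib_right sum.distrib[symmetric]
  proof (rule sum_mono)
    fix n assume "n \<in> G"
    then have "2 * real (b n) \<le> 32^j"
      using b by (metis of_nat_le_iff of_nat_mult of_nat_numeral of_nat_power)
    then have "real (b n) * ?\<delta> \<le> dint (real (b n) * ?z + real (b n) * ?\<delta>) + dint (real (b n) * ?z)"
      by (intro le_dint_add_dint) (auto simp: power_one_over field_simps)
    then have "r n * (real (b n) * ?\<delta>)
        \<le> r n * (dint (real (b n) * ?z + real (b n) * ?\<delta>) + dint (real (b n) * ?z))"
      by (rule mult_left_mono[OF _ r0])
    then show "r n * real (b n) * ?\<delta>
        \<le> r n * dint (real (b n) * ?z) + r n * dint (real (b n) * (?z + ?\<delta>))"
      by (simp add: algebra_simps)
  qed
  also have "\<dots> \<le> 2 * F j (greedy_approx F Js j)"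
    using greedy_approx_choice[of i Js F] \<open>j \<in> Js\<close> unfolding i by simp
  finally show ?thesis .
qed

lemma greedy_approx_block_upper:
  fixes b :: "nat \<Rightarrow> nat" and r :: "nat \<Rightarrow> real"
  assumes r0: "\<And>n. 0 \<le> r n" and F: "F j = (\<lambda>y. \<Sum>n\<in>G. r n * dint (real (b n) * y))"
  shows "F j (greedy_approx F Js j) \<le> F j (greedy_limit F Js) + (\<Sum>n\<in>G. r n * real (b n)) * (1/32)^j / 31"
  unfolding F sum_distrib_right sum_divide_distrib sum.distrib[symmetric]
proof (rule sum_mono)
  fix n
  let ?z = "greedy_approx F Js j" and ?x = "greedy_limit F Js"
  have "real (b n) * ?z \<le> real (b n) * ?x"
    using greedy_limit_tail(1)[of F Js j] by (intro mult_left_mono) auto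
  then have "dint (real (b n) * ?z) \<le> dint (real (b n) * ?x) + real (b n) * (?x - ?z)"
    using dint_le_dint_add_dist[of "real (b n) * ?z" "real (b n) * ?x"]
    by (simp add: right_diff_distrib abs_of_nonpos)
  also have "\<dots> \<le> dint (real (b n) * ?x) + real (b n) * ((1/32)^j / 31)"
    using greedy_limit_tail(2)[of F Js j] by (intro add_left_mono mult_left_mono) auto
  finally have "r n * dint (real (b n) * ?z) \<le> r n * (dint (real (b n) * ?x) + real (b n) * ((1/32)^j / 31))"
    by (rule mult_left_mono[OF _ r0])
  then show "r n * dint (real (b n) * ?z) \<le> r n * dint (real (b n) * ?x) + r n * real (b n) * (1/32)^j / 31"
    by (simp add: algebra_simps)
qed

lemma greedy_limit_block_bound:
  fixes b :: "nat \<Rightarrow> nat" and r :: "nat \<Rightarrow> real"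
  assumes "0 < j" "j \<in> Js" and b: "\<And>n. n \<in> G \<Longrightarrow> 2 * b n \<le> (32::nat)^j"
    and r0: "\<And>n. 0 \<le> r n" and F: "F j = (\<lambda>y. \<Sum>n\<in>G. r n * dint (real (b n) * y))"
  shows "(\<Sum>n\<in>G. r n * real (b n)) * (1/32)^j \<le> 4 * F j (greedy_limit F Js)"
proof -
  have "0 \<le> F j (greedy_limit F Js)"
    unfolding F by (intro sum_nonneg mult_nonneg_nonneg r0 dint_nonneg)
  then show ?thesis
    using greedy_approx_block_lower[where F = F and r = r, OF assms]
      greedy_approx_block_upper[where F = F and Js = Js, OF r0 F]
    by linarith
qed

lemma summable_by_fibrewise_bound:
  fixes h s :: "nat \<Rightarrow> real" and J :: "nat \<Rightarrow> nat"
  assumes h0: "\<And>n. 0 \<le> h n" and s0: "\<And>n. 0 \<le> s n" and "summable s" and "0 \<le> c"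
    and fin: "\<And>M. finite {n. J n \<le> M}"
    and fibre: "\<And>j. (\<Sum>n\<in>{n. J n = j}. h n) \<le> c * (\<Sum>n\<in>{n. J n = j}. s n)"
  shows "summable h"
proof (rule summableI_nonneg_bounded[OF h0])
  fix N
  define M where "M = Max (J ` {..<N})"
  have fibres: "(\<Sum>n\<in>{n. J n \<le> M}. f n) = (\<Sum>j\<le>M. \<Sum>n\<in>{n. J n = j}. f n)" for f :: "nat \<Rightarrow> real"
  proof -
    have "(\<Sum>n\<in>{n. J n \<le> M}. f n) = (\<Sum>j\<le>M. \<Sum>n\<in>{n \<in> {n. J n \<le> M}. J n = j}. f n)"
      by (rule sum.group[symmetric, OF fin finite_atMost]) auto
    also have "\<dots> = (\<Sum>j\<le>M. \<Sum>n\<in>{n. J n = j}. f n)"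
      by (intro sum.cong refl arg_cong[where f = "sum f"]) auto
    finally show ?thesis .
  qed
  have "(\<Sum>n<N. h n) \<le> (\<Sum>n\<in>{n. J n \<le> M}. h n)"
    by (rule sum_mono2[OF fin]) (auto simp: M_def h0)
  also have "\<dots> \<le> c * (\<Sum>n\<in>{n. J n \<le> M}. s n)"
    unfolding fibres by (subst sum_distrib_left) (rule sum_mono, rule fibre)
  also have "\<dots> \<le> c * suminf s"
    by (intro mult_left_mono sum_le_suminf \<open>summable s\<close> fin \<open>0 \<le> c\<close> s0)
  finally show "(\<Sum>n<N. h n) \<le> c * suminf s" .
qed

lemma summable_greedy_scale_weights:
  fixes b J :: "nat \<Rightarrow> nat" and r :: "nat \<Rightarrow> real"
  assumes r0: "\<And>n. 0 \<le> r n"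
    and J: "\<And>n. 0 < J n" "\<And>n. J n \<in> Js" "\<And>n. 2 * b n \<le> (32::nat)^(J n)"
    and fin: "\<And>M. finite {n. J n \<le> M}"
    and F: "\<And>j. F j = (\<lambda>y. \<Sum>n\<in>{n. J n = j}. r n * dint (real (b n) * y))"
    and s: "summable (\<lambda>n. r n * dint (real (b n) * greedy_limit F Js))"
  shows "summable (\<lambda>n. r n * real (b n) * (1/32)^(J n))"
proof (rule summable_by_fibrewise_bound[where c = 4 and J = J, OF _ _ s])
  show "(\<Sum>n\<in>{n. J n = j}. r n * real (b n) * (1/32)^(J n))
      \<le> 4 * (\<Sum>n\<in>{n. J n = j}. r n * dint (real (b n) * greedy_limit F Js))" for j
  proof (cases "{n. J n = j} = {}")
    case False
    then obtain n0 where "J n0 = j" by blast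
    have "(\<Sum>n\<in>{n. J n = j}. r n * real (b n) * (1/32)^(J n))
        = (\<Sum>n\<in>{n. J n = j}. r n * real (b n)) * (1/32)^j"
      by (simp add: sum_distrib_right)
    also have "\<dots> \<le> 4 * F j (greedy_limit F Js)"
      by (rule greedy_limit_block_bound[OF _ _ _ r0 F]) (use J \<open>J n0 = j\<close> in auto)
    finally show ?thesis by (simp add: F)
  qed simp
qed (use fin r0 in \<open>simp_all add: dint_nonneg\<close>)

definition pow32_exp :: "nat \<Rightarrow> nat" where
  "pow32_exp m = (LEAST j. 2 * m \<le> (32::nat)^j)"

lemma pow32_exp_le_iff: "pow32_exp m \<le> j \<longleftrightarrow> 2 * m \<le> (32::nat)^j"
proof
  have "2 * m \<le> (32::nat)^(2 * m)"
    using less_exp[of "2 * m"] power_mono[of 2 32 "2 * m"] by simp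
  then have "2 * m \<le> (32::nat)^(pow32_exp m)"
    unfolding pow32_exp_def by (rule LeastI)
  then show "pow32_exp m \<le> j \<Longrightarrow> 2 * m \<le> 32^j"
    by (meson order.trans power_increasing_iff one_less_numeral_iff semiring_norm(76))
qed (simp add: pow32_exp_def Least_le)

lemma pow32_exp_pos: "0 < m \<Longrightarrow> 0 < pow32_exp m"
  using pow32_exp_le_iff[of m 0] by simp

lemma pow32_exp_tight: "0 < m \<Longrightarrow> (32::nat)^pow32_exp m < 64 * m"
proof -
  assume "0 < m"
  then obtain j where j: "pow32_exp m = Suc j"
    using pow32_exp_pos gr0_implies_Suc by blast
  then have "(32::nat)^j < 2 * m"
    using pow32_exp_le_iff[of m j] by simp
  then show ?thesis
    unfolding j by simp
qed

lemma finite_pow32_exp_less: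
  fixes b :: "nat \<Rightarrow> nat"
  assumes "strict_mono b"
  shows "finite {n. pow32_exp (b n) < K}"
proof (rule finite_subset[OF _ finite_atMost[of "32^K"]])
  show "{n. pow32_exp (b n) < K} \<subseteq> {..32^K}"
  proof
    fix n assume "n \<in> {n. pow32_exp (b n) < K}"
    then have "2 * b n \<le> 32^K" using pow32_exp_le_iff[of "b n" K] by simp
    then show "n \<in> {..32^K}" using seq_suble[OF assms, of n] by simp
  qed
qed

lemma pow32_exp_weight_bound:
  assumes "0 < m" "j \<le> pow32_exp m + w"
  shows "(1/32::real)^w \<le> 64 * real m * (1/32)^j"
proof -
  have "real (32^pow32_exp m) < real (64 * m)"
    using pow32_exp_tight[OF assms(1)] unfolding of_nat_less_iff .
  then have "(1/32::real)^w \<le> 64 * real m * (1/32)^(pow32_exp m + w)"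
    by (simp add: power_add power_one_over field_simps)
  also have "\<dots> \<le> 64 * real m * (1/32)^j"
    using assms(2) by (intro mult_left_mono power_decreasing) auto
  finally show ?thesis .
qed

lemma exists_point_square_lacunary_divergent:
  fixes b :: "nat \<Rightarrow> nat" and r :: "nat \<Rightarrow> real"
  assumes b: "strict_mono b" and r0: "\<And>n. 0 \<le> r n" and ns: "\<not> summable r"
  shows "\<exists>x. 0 \<le> x \<and> x \<le> 1 \<and> (\<lambda>k. dint (real (32^(k * k)) * x)) \<longlonglongrightarrow> 0 \<and>
             \<not> summable (\<lambda>n. r n * dint (real (b n) * x))"
proof -
  define e where "e n = pow32_exp (b n)" for n
  have fin_e: "finite {n. e n < K}" for K
    unfolding e_def by (rule finite_pow32_exp_less[OF b])
  obtain W where W: "mono W" "\<And>k. W k \<le> k" "filterlim W at_top sequentially"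
    and W_ns: "\<not> summable (\<lambda>n. r n * (1/32)^(W (e n)))"
    using slow_weight_not_summable[OF r0 ns fin_e, of "\<lambda>m. (1/32)^m"]
    by (metis zero_less_divide_1_iff zero_less_numeral zero_less_power)
  \<comment> \<open>\<open>max 1\<close> only matters for \<open>b 0 = 0\<close>, whose scale \<open>e 0 = 0\<close> is not a digit position.\<close>
  define J where "J n = (LEAST j. j \<in> square_gaps W \<and> max 1 (e n) \<le> j)" for n
  have J: "J n \<in> square_gaps W" "max 1 (e n) \<le> J n" "J n \<le> max 1 (e n) + W (max 1 (e n))" for n
    using least_square_gap_above[OF W(1,2), of "max 1 (e n)"] unfolding J_def by auto
  define F where "F j = (\<lambda>y. \<Sum>n\<in>{n. J n = j}. r n * dint (real (b n) * y))" for j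
  define x where "x = greedy_limit F (square_gaps W)"
  have "0 \<le> x" "x \<le> 1"
    using greedy_limit_tail[of F "square_gaps W" 0] by (simp_all add: x_def)
  moreover have "(\<lambda>k. dint (real (32^(k * k)) * x)) \<longlonglongrightarrow> 0"
    using greedy_limit_square_gaps[OF W(3), of F] by (simp add: x_def)
  moreover have "\<not> summable (\<lambda>n. r n * dint (real (b n) * x))"
  proof
    assume s: "summable (\<lambda>n. r n * dint (real (b n) * x))"
    have h: "summable (\<lambda>n. r n * real (b n) * (1/32)^(J n))"
    proof (rule summable_greedy_scale_weights[OF r0 _ J(1) _ _ F_def s[unfolded x_def]])
      show "0 < J n" "2 * b n \<le> 32^(J n)" for n
        using J(2)[of n] pow32_exp_le_iff[of "b n"] by (auto simp: e_def)
      show "finite {n. J n \<le> M}" for M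
        by (rule finite_subset[OF _ fin_e[of "Suc M"]])
          (use J(2) in \<open>auto intro: le_imp_less_Suc order_trans\<close>)
    qed
    have dominated: "norm (r n * (1/32)^(W (e n))) \<le> 64 * (r n * real (b n) * (1/32)^(J n))"
      if "1 \<le> n" for n
    proof -
      have "0 < b n"
        using seq_suble[OF b, of n] that by simp
      then have "(1/32::real)^(W (e n)) \<le> 64 * real (b n) * (1/32)^(J n)"
        using J(3)[of n] pow32_exp_pos[of "b n"] by (intro pow32_exp_weight_bound) (auto simp: e_def)
      then have "r n * (1/32)^(W (e n)) \<le> r n * (64 * real (b n) * (1/32)^(J n))"
        by (rule mult_left_mono[OF _ r0])
      then show ?thesis
        using r0[of n] by (simp add: mult_ac)
    qed
    have "summable (\<lambda>n. r n * (1/32)^(W (e n)))"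
      using summable_comparison_test'[OF summable_mult[OF h, of 64] dominated] .
    with W_ns show False ..
  qed
  ultimately show ?thesis by blast
qed

theorem corollary3p15:
  fixes I :: "nat set set"
  assumes "admissible_ideal I"
  shows "\<exists>X. arbault X \<and> X \<notin> N_ideal I"
proof -
  define X where "X = {x. 0 \<le> x \<and> x \<le> 1 \<and> (\<lambda>k. dint (real (32^(k * k)) * x)) \<longlonglongrightarrow> 0}"
  have "strict_mono (\<lambda>k. (32::nat)^(k * k))"
    unfolding strict_mono_Suc_iff by (intro allI power_strict_increasing) auto
  then have "arbault X"
    unfolding arbault_def X_def by (intro conjI exI[of _ "\<lambda>k. (32::nat)^(k * k)"]) auto
  moreover have "X \<notin> N_ideal I"
  proof
    assume "X \<in> N_ideal I"
    then obtain a :: "nat \<Rightarrow> nat" and r :: "nat \<Rightarrow> real" where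
      a: "strict_mono a" and r: "\<And>n. 0 < r n" "\<not> summable r"
      and summable: "\<forall>x\<in>X. summable (\<lambda>n. r n * dint (real (a n) * x))"
      unfolding N_ideal_def by blast
    obtain x where "x \<in> X" "\<not> summable (\<lambda>n. r n * dint (real (a n) * x))"
      using exists_point_square_lacunary_divergent[OF a less_imp_le[OF r(1)] r(2)]
      unfolding X_def by blast
    with summable show False by blast
  qed
  ultimately show ?thesis by blast
qed

end
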